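(* For every zero-set $\mathcal Z$, $$\tfrac14|\mathcal Z|\le \gamma(\mathcal Z)\le |\mathcal Z|.$$
   Context: Let $\mathbb Z_+=\{0,1,2,\dots\}$ and, for positive integers $a,b$, let $R_{a,b}=([0,a-1]\times[0,b-1])\cap\mathbb Z_+^2$. A (discrete) zero-set is a set $\mathcal Z\subseteq\mathbb Z_+^2$ that is a union of rectangles $R_{a,b}$ (equivalently, $(u,v)\in\mathcal Z$ implies $\{0,\dots,u\}\times\{0,\dots,v\}\subseteq\mathcal Z$); here $\mathcal Z$ is finite, i.e. a Young diagram. For $A\subseteq\mathbb Z_+^2$ and $x\in\mathbb Z_+^2$ let $\mathrm{row}(x,A)$ (resp. $\mathrm{col}(x,A)$) be the number of points of $A$ on the horizontal (resp. vertical) line through $x$. The neighborhood growth transformation is $\mathcal T(A)=A\cup\{x\in\mathbb Z_+^2\setminus A:(\mathrm{row}(x,A),\mathrm{col}(x,A))\notin\mathcal Z\}$. A set $A$ spans if $\bigcup_{t\ge0}\mathcal T^t(A)=\mathbb Z_+^2$. $\gamma(\mathcal Z)$ is the minimum cardinality of a finite spanning set. *)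

theory Defs
  imports Main "HOL-Library.Extended_Nat"
begin

type_synonym pt = "nat \<times> nat"

definition zero_set :: "pt set \<Rightarrow> bool" where
  "zero_set Z \<longleftrightarrow> (\<forall>u v. (u, v) \<in> Z \<longrightarrow> {0..u} \<times> {0..v} \<subseteq> Z)"

definition row_cnt :: "pt \<Rightarrow> pt set \<Rightarrow> enat" where
  "row_cnt x A = (let S = {y \<in> A. snd y = snd x} in
                   if finite S then enat (card S) else \<infinity>)"

definition col_cnt :: "pt \<Rightarrow> pt set \<Rightarrow> enat" where
  "col_cnt x A = (let S = {y \<in> A. fst y = fst x} in
                   if finite S then enat (card S) else \<infinity>)"

definition NG :: "pt set \<Rightarrow> pt set \<Rightarrow> pt set" where
  "NG Z A = A \<union> {x. x \<notin> A \<and>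
     (row_cnt x A, col_cnt x A) \<notin> (\<lambda>(a, b). (enat a, enat b)) ` Z}"

definition spans :: "pt set \<Rightarrow> pt set \<Rightarrow> bool" where
  "spans Z A \<longleftrightarrow> (\<Union>t. (NG Z ^^ t) A) = UNIV"

definition gamma :: "pt set \<Rightarrow> nat" where
  "gamma Z = Inf {card A | A. finite A \<and> spans Z A}"

end

theory Submission
  imports Defs
begin

text \<open>For a zero-set \<open>Z\<close> the growth map \<open>NG Z\<close> is monotone, so a spanning set cannot
  be contained in a proper \<open>NG Z\<close>-stable set. Upper bound: \<open>Z\<close> spans, as the rows
  fill up one by one. Once \<open>Z\<close> and the rows below height \<open>k\<close> are occupied, a point of
  row \<open>k\<close> with counts \<open>(a, b) \<in> Z\<close> would have \<open>b \<ge> k\<close>, so row \<open>k\<close> of \<open>Z\<close> alone would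
  give it \<open>a + 1\<close> points in its row.
  Lower bound: let \<open>A\<close> span and \<open>(u, v) \<in> Z\<close>. If \<open>P\<close> is the set of rows meeting \<open>A\<close>
  in more than \<open>u div 2\<close> points and \<open>|P| \<le> v\<close>, then more than \<open>(u + 1) div 2\<close>
  columns meet \<open>A\<close> in more than \<open>v - |P|\<close> points, for otherwise the union of \<open>A\<close>,
  the rows in \<open>P\<close> and these columns would be a proper stable set. This bounds the
  height of column \<open>u\<close> of \<open>Z\<close>, and summing over \<open>u\<close> while double counting the rows
  and columns of \<open>A\<close> gives \<open>|Z| \<le> 2|A| + 2|A|\<close>.\<close>

definition row :: "pt set \<Rightarrow> nat \<Rightarrow> pt set" where
  "row A j = {x \<in> A. snd x = j}"

definition col :: "pt set \<Rightarrow> nat \<Rightarrow> pt set" where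
  "col A i = {x \<in> A. fst x = i}"

lemma zero_set_downward:
  assumes "zero_set Z" "(u, v) \<in> Z" "a \<le> u" "b \<le> v"
  shows "(a, b) \<in> Z"
proof -
  have "{0..u} \<times> {0..v} \<subseteq> Z" using assms(1,2) unfolding zero_set_def by blast
  then show ?thesis using assms(3,4) by auto
qed

lemma enat_pair_in_zero_set:
  assumes "zero_set Z" "(u, v) \<in> Z" "a \<le> enat u" "b \<le> enat v"
  shows "(a, b) \<in> (\<lambda>(a, b). (enat a, enat b)) ` Z"
proof -
  obtain a' b' where ab: "a = enat a'" "b = enat b'"
    using assms(3,4) enat_ile by blast
  then have "(a', b') \<in> Z"
    using zero_set_downward[OF assms(1,2)] assms(3,4) by simp
  then show ?thesis using ab by force
qed

lemma row_cnt_row: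
  "row_cnt x A = (if finite (row A (snd x)) then enat (card (row A (snd x))) else \<infinity>)"
  by (simp add: row_cnt_def row_def)

lemma col_cnt_col:
  "col_cnt x A = (if finite (col A (fst x)) then enat (card (col A (fst x))) else \<infinity>)"
  by (simp add: col_cnt_def col_def)

lemma row_mono: "A \<subseteq> B \<Longrightarrow> row A j \<subseteq> row B j"
  by (auto simp: row_def)

lemma col_mono: "A \<subseteq> B \<Longrightarrow> col A i \<subseteq> col B i"
  by (auto simp: col_def)

lemma card_col_le: "finite A \<Longrightarrow> card (col A i) \<le> card A"
  unfolding col_def by (intro card_mono) auto

lemma sum_card_row: "finite A \<Longrightarrow> (\<Sum>j\<in>snd ` A. card (row A j)) = card A"
  using sum.image_gen[of A "\<lambda>_. 1 :: nat" snd] by (simp add: row_def)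

lemma sum_card_col: "finite A \<Longrightarrow> (\<Sum>i\<in>fst ` A. card (col A i)) = card A"
  using sum.image_gen[of A "\<lambda>_. 1 :: nat" fst] by (simp add: col_def)

lemma enat_card_le_row_cnt:
  assumes "S \<subseteq> row A (snd x)" "finite S"
  shows "enat (card S) \<le> row_cnt x A"
  using assms card_mono by (auto simp: row_cnt_row)

lemma enat_card_le_col_cnt:
  assumes "S \<subseteq> col A (fst x)" "finite S"
  shows "enat (card S) \<le> col_cnt x A"
  using assms card_mono by (auto simp: col_cnt_col)

lemma row_cnt_le_enat:
  assumes "row A (snd x) \<subseteq> S" "finite S" "card S \<le> n"
  shows "row_cnt x A \<le> enat n"
  using assms card_mono[OF assms(2,1)] finite_subset[OF assms(1,2)] by (simp add: row_cnt_row)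

lemma col_cnt_le_enat:
  assumes "col A (fst x) \<subseteq> S" "finite S" "card S \<le> n"
  shows "col_cnt x A \<le> enat n"
  using assms card_mono[OF assms(2,1)] finite_subset[OF assms(1,2)] by (simp add: col_cnt_col)

lemma row_cnt_mono:
  assumes "A \<subseteq> B"
  shows "row_cnt x A \<le> row_cnt x B"
proof (cases "finite (row B (snd x))")
  case True
  moreover have "row A (snd x) \<subseteq> row B (snd x)" using row_mono[OF assms] .
  ultimately show ?thesis
    using finite_subset by (simp add: row_cnt_row card_mono)
qed (simp add: row_cnt_row)

lemma col_cnt_mono:
  assumes "A \<subseteq> B"
  shows "col_cnt x A \<le> col_cnt x B"
proof (cases "finite (col B (fst x))")
  case True
  moreover have "col A (fst x) \<subseteq> col B (fst x)" using col_mono[OF assms] .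
  ultimately show ?thesis
    using finite_subset by (simp add: col_cnt_col card_mono)
qed (simp add: col_cnt_col)

lemma subset_NG: "A \<subseteq> NG Z A"
  unfolding NG_def by blast

lemma NG_mono:
  assumes "zero_set Z" "B \<subseteq> C"
  shows "NG Z B \<subseteq> NG Z C"
proof
  fix x assume x: "x \<in> NG Z B"
  show "x \<in> NG Z C"
  proof (cases "x \<in> C")
    case True
    then show ?thesis using subset_NG by blast
  next
    case False
    then have B: "(row_cnt x B, col_cnt x B) \<notin> (\<lambda>(a, b). (enat a, enat b)) ` Z"
      using x assms(2) by (auto simp: NG_def)
    have "(row_cnt x C, col_cnt x C) \<notin> (\<lambda>(a, b). (enat a, enat b)) ` Z"
    proof
      assume "(row_cnt x C, col_cnt x C) \<in> (\<lambda>(a, b). (enat a, enat b)) ` Z"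
      then obtain u v where uv: "(u, v) \<in> Z" "row_cnt x C = enat u" "col_cnt x C = enat v"
        by auto
      have "row_cnt x B \<le> enat u" "col_cnt x B \<le> enat v"
        using uv row_cnt_mono[OF assms(2)] col_cnt_mono[OF assms(2)] by metis+
      with B show False using enat_pair_in_zero_set[OF assms(1) uv(1)] by blast
    qed
    with False show ?thesis by (simp add: NG_def)
  qed
qed

lemma funpow_NG_subset_stable:
  assumes "zero_set Z" "A \<subseteq> C" "NG Z C \<subseteq> C"
  shows "(NG Z ^^ t) A \<subseteq> C"
proof (induction t)
  case (Suc t)
  then show ?case using NG_mono[OF assms(1) Suc] assms(3) by simp
qed (simp add: assms(2))

lemma spans_stable_eq_UNIV:
  assumes "zero_set Z" "spans Z A" "A \<subseteq> C" "NG Z C \<subseteq> C"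
  shows "C = UNIV"
  using assms funpow_NG_subset_stable[OF assms(1,3,4)] unfolding spans_def by blast

lemma NG_subset_if_counts_bounded:
  assumes "zero_set Z" "(u, v) \<in> Z"
    and "\<And>x. x \<notin> C \<Longrightarrow> row_cnt x C \<le> enat u \<and> col_cnt x C \<le> enat v"
  shows "NG Z C \<subseteq> C"
proof
  fix x assume "x \<in> NG Z C"
  then show "x \<in> C"
    using assms(3) enat_pair_in_zero_set[OF assms(1,2)] unfolding NG_def by blast
qed

lemma Z_rows_below_subset_funpow_NG:
  assumes "zero_set Z"
  shows "Z \<union> {x. snd x < k} \<subseteq> (NG Z ^^ k) Z"
proof (induction k)
  case (Suc k)
  let ?B = "(NG Z ^^ k) Z"
  have row_k: "x \<in> NG Z ?B" if x: "x = (i, k)" for x i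
  proof (cases "x \<in> ?B")
    case False
    have "(row_cnt x ?B, col_cnt x ?B) \<notin> (\<lambda>(a, b). (enat a, enat b)) ` Z"
    proof
      assume "(row_cnt x ?B, col_cnt x ?B) \<in> (\<lambda>(a, b). (enat a, enat b)) ` Z"
      then obtain a b where ab: "(a, b) \<in> Z" "row_cnt x ?B = enat a" "col_cnt x ?B = enat b"
        by auto
      have "Pair i ` {..<k} \<subseteq> col ?B (fst x)"
        using Suc.IH x by (auto simp: col_def)
      from enat_card_le_col_cnt[OF this] have "enat (card (Pair i ` {..<k})) \<le> enat b"
        using ab(3) by simp
      then have "k \<le> b" by (simp add: card_image inj_on_def)
      then have "(\<lambda>i'. (i', k)) ` {..a} \<subseteq> row ?B (snd x)"
        using Suc.IH x zero_set_downward[OF assms ab(1)] by (auto simp: row_def)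
      from enat_card_le_row_cnt[OF this] have "enat (card ((\<lambda>i'. (i', k)) ` {..a})) \<le> enat a"
        using ab(2) by simp
      then show False by (simp add: card_image inj_on_def)
    qed
    with False show ?thesis by (simp add: NG_def)
  qed (use subset_NG in blast)
  have "x \<in> NG Z ?B" if "x \<in> Z \<union> {x. snd x < Suc k}" for x
  proof (cases "snd x = k")
    case True
    then show ?thesis using row_k[of x "fst x"] by (simp add: prod_eq_iff)
  next
    case False
    then have "x \<in> ?B" using that Suc.IH by (auto simp: less_Suc_eq)
    then show ?thesis using subset_NG by blast
  qed
  then show ?case by auto
qed simp

lemma spans_self:
  assumes "zero_set Z"
  shows "spans Z Z"
  unfolding spans_def
proof (intro set_eqI iffI)
  fix x :: pt
  have "x \<in> (NG Z ^^ Suc (snd x)) Z"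
    using Z_rows_below_subset_funpow_NG[OF assms, of "Suc (snd x)"] by auto
  then show "x \<in> (\<Union>t. (NG Z ^^ t) Z)" by blast
qed simp

lemma card_eq_sum_card_col:
  assumes "finite Z" "fst ` Z \<subseteq> {..<N}"
  shows "card Z = (\<Sum>u<N. card (col Z u))"
proof -
  have "card Z = (\<Sum>u\<in>fst ` Z. card (col Z u))"
    using sum_card_col[OF assms(1)] ..
  also have "\<dots> = (\<Sum>u<N. card (col Z u))"
  proof (rule sum.mono_neutral_left)
    show "\<forall>u\<in>{..<N} - fst ` Z. card (col Z u) = 0"
    proof
      fix u assume u: "u \<in> {..<N} - fst ` Z"
      have "col Z u = {}"
      proof (rule equals0I)
        fix x assume "x \<in> col Z u"
        then have "u \<in> fst ` Z" by (auto simp: col_def)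
        with u show False by blast
      qed
      then show "card (col Z u) = 0" by simp
    qed
  qed (use assms in auto)
  finally show ?thesis .
qed

lemma not_spans_if_sparse_cross:
  assumes "zero_set Z" "(u, v) \<in> Z" "finite A" "finite P" "finite Q"
    and rows: "\<And>j. j \<notin> P \<Longrightarrow> card Q + card (row A j) \<le> u"
    and cols: "\<And>i. i \<notin> Q \<Longrightarrow> card P + card (col A i) \<le> v"
  shows "\<not> spans Z A"
proof
  assume span: "spans Z A"
  define C where "C = A \<union> {x. snd x \<in> P \<or> fst x \<in> Q}"
  have "NG Z C \<subseteq> C"
  proof (rule NG_subset_if_counts_bounded[OF assms(1,2)])
    fix x assume "x \<notin> C"
    then have x: "snd x \<notin> P" "fst x \<notin> Q" by (auto simp: C_def)
    let ?R = "(\<lambda>i. (i, snd x)) ` Q \<union> row A (snd x)"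
    have "row C (snd x) \<subseteq> ?R"
      using x by (auto simp: C_def row_def)
    moreover have "card ?R \<le> u"
      using card_Un_le[of "(\<lambda>i. (i, snd x)) ` Q" "row A (snd x)"]
        card_image_le[OF assms(5), of "\<lambda>i. (i, snd x)"] rows[OF x(1)] by linarith
    ultimately have "row_cnt x C \<le> enat u"
      using assms(3,5) by (intro row_cnt_le_enat) (auto simp: row_def)
    let ?K = "Pair (fst x) ` P \<union> col A (fst x)"
    have "col C (fst x) \<subseteq> ?K"
      using x by (auto simp: C_def col_def)
    moreover have "card ?K \<le> v"
      using card_Un_le[of "Pair (fst x) ` P" "col A (fst x)"]
        card_image_le[OF assms(4), of "Pair (fst x)"] cols[OF x(2)] by linarith
    ultimately have "col_cnt x C \<le> enat v"
      using assms(3,4) by (intro col_cnt_le_enat) (auto simp: col_def)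
    with \<open>row_cnt x C \<le> enat u\<close> show "row_cnt x C \<le> enat u \<and> col_cnt x C \<le> enat v" ..
  qed
  moreover have "A \<subseteq> C" by (simp add: C_def)
  ultimately have "C = UNIV"
    using spans_stable_eq_UNIV[OF assms(1) span] by blast
  obtain i where i: "i \<notin> Q \<union> fst ` A"
    using ex_new_if_finite[OF infinite_UNIV_nat, of "Q \<union> fst ` A"] assms(3,5) by auto
  obtain j where j: "j \<notin> P"
    using ex_new_if_finite[OF infinite_UNIV_nat, of P] assms(4) by auto
  have "(i, j) \<notin> A"
    using i by (metis UnI2 fst_conv image_eqI)
  with i j have "(i, j) \<notin> C"
    by (simp add: C_def)
  with \<open>C = UNIV\<close> show False by blast
qed

definition rows_above :: "pt set \<Rightarrow> nat \<Rightarrow> nat set" where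
  "rows_above A t = {j. t < card (row A j)}"

definition cols_above :: "pt set \<Rightarrow> nat \<Rightarrow> nat set" where
  "cols_above A t = {i. t < card (col A i)}"

lemma rows_above_eq: "rows_above A t = {j \<in> snd ` A. t < card (row A j)}"
proof -
  have "j \<in> snd ` A" if "t < card (row A j)" for j
  proof -
    from that have "row A j \<noteq> {}" by auto
    then obtain x where "x \<in> A" "snd x = j"
      unfolding row_def by blast
    then show ?thesis by (blast intro: rev_image_eqI)
  qed
  then show ?thesis by (auto simp: rows_above_def)
qed

lemma cols_above_eq: "cols_above A t = {i \<in> fst ` A. t < card (col A i)}"
proof -
  have "i \<in> fst ` A" if "t < card (col A i)" for i
  proof -
    from that have "col A i \<noteq> {}" by auto
    then obtain x where "x \<in> A" "fst x = i"
      unfolding col_def by blast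
    then show ?thesis by (blast intro: rev_image_eqI)
  qed
  then show ?thesis by (auto simp: cols_above_def)
qed

lemma cols_above_empty:
  assumes "finite A" "card A \<le> t"
  shows "cols_above A t = {}"
proof -
  have "card (col A i) \<le> t" for i
    using card_col_le[OF assms(1), of i] assms(2) by linarith
  then show ?thesis by (auto simp: cols_above_def not_less)
qed

lemma spans_many_cols_above:
  assumes "zero_set Z" "finite A" "spans Z A" "(u, v) \<in> Z"
    and P: "card (rows_above A (u div 2)) \<le> v"
  shows "(u + 1) div 2 < card (cols_above A (v - card (rows_above A (u div 2))))"
proof (rule ccontr)
  let ?P = "rows_above A (u div 2)"
  let ?Q = "cols_above A (v - card ?P)"
  assume "\<not> ?thesis"
  then have Q: "card ?Q \<le> (u + 1) div 2" by simp
  have "\<not> spans Z A"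
  proof (rule not_spans_if_sparse_cross[OF assms(1,4,2)])
    show "finite ?P" "finite ?Q"
      using assms(2) by (simp_all add: rows_above_eq cols_above_eq)
  next
    fix j assume "j \<notin> ?P"
    then have "card (row A j) \<le> u div 2" by (simp add: rows_above_def)
    moreover have "(u + 1) div 2 + u div 2 = u" by presburger
    ultimately show "card ?Q + card (row A j) \<le> u" using Q by linarith
  next
    fix i assume "i \<notin> ?Q"
    then have "card (col A i) \<le> v - card ?P" by (simp add: cols_above_def)
    with P show "card ?P + card (col A i) \<le> v" by linarith
  qed
  with assms(3) show False by contradiction
qed

lemma card_col_le_if_spans:
  assumes "zero_set Z" "finite A" "spans Z A"
  shows "card (col Z u) \<le> card (rows_above A (u div 2))
           + card {w \<in> {..<card A}. (u + 1) div 2 < card (cols_above A w)}"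
proof -
  let ?p = "card (rows_above A (u div 2))"
  let ?W = "{w \<in> {..<card A}. (u + 1) div 2 < card (cols_above A w)}"
  let ?V = "{..<?p} \<union> (\<lambda>w. w + ?p) ` ?W"
  have "col Z u \<subseteq> Pair u ` ?V"
  proof
    fix x assume "x \<in> col Z u"
    then obtain v where x: "x = (u, v)" "(u, v) \<in> Z"
      by (cases x) (auto simp: col_def)
    have "v \<in> ?V"
    proof (cases "v < ?p")
      case False
      then have many: "(u + 1) div 2 < card (cols_above A (v - ?p))"
        using spans_many_cols_above[OF assms x(2)] by simp
      then have "cols_above A (v - ?p) \<noteq> {}" by auto
      then have "v - ?p < card A"
        using cols_above_empty[OF assms(2)] by (meson not_less)
      with many have "v - ?p \<in> ?W" by simp
      moreover have "v = v - ?p + ?p" using False by simp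
      ultimately show ?thesis by blast
    qed simp
    with x(1) show "x \<in> Pair u ` ?V" by blast
  qed
  then have "card (col Z u) \<le> card (Pair u ` ?V)"
    by (intro card_mono) auto
  also have "\<dots> \<le> card ?V" by (rule card_image_le) simp
  also have "\<dots> \<le> ?p + card ((\<lambda>w. w + ?p) ` ?W)"
    using card_Un_le[of "{..<?p}"] by simp
  also have "\<dots> \<le> ?p + card ?W"
    using card_image_le[of ?W "\<lambda>w. w + ?p"] by simp
  finally show ?thesis .
qed

lemma card_half_less_le: "card {u \<in> U. u div 2 < r} \<le> 2 * r"
proof -
  have "{u \<in> U. u div 2 < r} \<subseteq> {..<2 * r}" by auto
  then show ?thesis by (metis card_lessThan card_mono finite_lessThan)
qed

lemma sum_card_half_less_le:
  assumes "finite R"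
  shows "(\<Sum>u<N. card {j \<in> R. u div 2 < f j}) \<le> 2 * sum f R"
proof -
  have "(\<Sum>u<N. card {j \<in> R. u div 2 < f j}) = (\<Sum>j\<in>R. card {u \<in> {..<N}. u div 2 < f j})"
    using sum_multicount_gen[of "{..<N}" R "\<lambda>u j. u div 2 < f j"] assms by simp
  also have "\<dots> \<le> (\<Sum>j\<in>R. 2 * f j)"
    by (intro sum_mono card_half_less_le)
  finally show ?thesis by (simp add: sum_distrib_left)
qed

lemma sum_card_rows_above_le:
  assumes "finite A"
  shows "(\<Sum>u<N. card (rows_above A (u div 2))) \<le> 2 * card A"
  using sum_card_half_less_le[where R="snd ` A" and N=N and f="\<lambda>j. card (row A j)"] assms
  by (simp add: rows_above_eq sum_card_row)

lemma sum_card_cols_above_le: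
  assumes "finite A"
  shows "(\<Sum>w<M. card (cols_above A w)) \<le> card A"
proof -
  have "(\<Sum>w<M. card (cols_above A w)) = (\<Sum>i\<in>fst ` A. card {w \<in> {..<M}. w < card (col A i)})"
    using sum_multicount_gen[of "{..<M}" "fst ` A" "\<lambda>w i. w < card (col A i)"] assms
    by (simp add: cols_above_eq)
  also have "\<dots> \<le> (\<Sum>i\<in>fst ` A. card (col A i))"
  proof (rule sum_mono)
    fix i
    have "{w \<in> {..<M}. w < card (col A i)} \<subseteq> {..<card (col A i)}" by auto
    then show "card {w \<in> {..<M}. w < card (col A i)} \<le> card (col A i)"
      by (metis card_lessThan card_mono finite_lessThan)
  qed
  also have "\<dots> = card A" using sum_card_col[OF assms] .
  finally show ?thesis .
qed

lemma card_le_four_card_if_spans: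
  assumes "zero_set Z" "finite Z" "finite A" "spans Z A"
  shows "card Z \<le> 4 * card A"
proof -
  obtain N where N: "fst ` Z \<subseteq> {..<N}"
    using assms(2) finite_nat_iff_bounded by blast
  let ?p = "\<lambda>u. card (rows_above A (u div 2))"
  let ?c = "\<lambda>w. card (cols_above A w)"
  let ?W = "\<lambda>u. {w \<in> {..<card A}. (u + 1) div 2 < ?c w}"
  have "card Z = (\<Sum>u<N. card (col Z u))"
    using card_eq_sum_card_col[OF assms(2) N] .
  also have "\<dots> \<le> (\<Sum>u<N. ?p u + card (?W u))"
    by (intro sum_mono card_col_le_if_spans[OF assms(1,3,4)])
  also have "\<dots> = (\<Sum>u<N. ?p u) + (\<Sum>u<N. card (?W u))"
    by (rule sum.distrib)
  finally have Z: "card Z \<le> (\<Sum>u<N. ?p u) + (\<Sum>u<N. card (?W u))" .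
  have "(\<Sum>u<N. card (?W u)) \<le> (\<Sum>u<N. card {w \<in> {..<card A}. u div 2 < ?c w})"
    by (intro sum_mono card_mono) (auto intro: le_less_trans[OF div_le_mono])
  also have "\<dots> \<le> 2 * (\<Sum>w<card A. ?c w)"
    by (rule sum_card_half_less_le) simp
  also have "\<dots> \<le> 2 * card A"
    using sum_card_cols_above_le[OF assms(3)] by simp
  finally show ?thesis
    using Z sum_card_rows_above_le[OF assms(3), of N] by linarith
qed

theorem mainTheorem1:
  fixes Z :: "(nat \<times> nat) set"
  assumes "zero_set Z" and "finite Z"
  shows "(\<exists>A. finite A \<and> spans Z A)
         \<and> real (card Z) / 4 \<le> real (gamma Z)
         \<and> gamma Z \<le> card Z"
proof -
  let ?S = "{card A | A. finite A \<and> spans Z A}"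
  have Z: "card Z \<in> ?S"
    using spans_self[OF assms(1)] assms(2) by blast
  then have "?S \<noteq> {}" by blast
  then have "gamma Z \<in> ?S"
    unfolding gamma_def by (rule Inf_nat_def1)
  then obtain A where A: "finite A" "spans Z A" "gamma Z = card A"
    by blast
  have "card Z \<le> 4 * gamma Z"
    using card_le_four_card_if_spans[OF assms A(1,2)] A(3) by simp
  then have "real (card Z) / 4 \<le> real (gamma Z)"
    by linarith
  moreover have "gamma Z \<le> card Z"
    unfolding gamma_def using Z by (rule cInf_lower) simp
  ultimately show ?thesis using A(1,2) by blast
qed

end
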